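(* Let $\vec h=(h_0,\dots,h_{L_{\mathrm H}})$ be a channel impulse response with $L_{\mathrm H}+1$ taps (so the channel memory is $L_{\mathrm H}$, i.e. $|H(\omega)|^2=\sum_{\ell=-L_{\mathrm H}}^{L_{\mathrm H}} g_\ell e^{-j\ell\omega}$ with $g_\ell=\sum_k h_k h_{k-\ell}^*$ and $g_{L_{\mathrm H}}\neq 0$), and let $P(\omega)$ be the transmit filter obtained by the waterfilling algorithm, i.e. $$|P(\omega)|^2=\max\left(0,\ \theta-\frac{N_0}{|H(\omega)|^2}\right)$$ for the constant $\theta$ fixed by the power constraint $\int_{-\pi}^{\pi}|P(\omega)|^2\,\mathrm d\omega=2\pi$. Let $K$ denote the memory of the combined channel-precoder response $\vec v=\vec h\star\vec p$ (i.e. $\vec v$ has $K+1$ taps). Then $K\ge L_{\mathrm H}$.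
   Context: $H(\omega)=\sum_{\ell=0}^{L_{\mathrm H}} h_\ell e^{-j\ell\omega}$ is the DTFT of the channel, $N_0>0$ the noise variance, $P(\omega)$ the DTFT of the transmit filter $\vec p$, and $\star$ denotes convolution. The waterfilling filter with Gaussian inputs and an unconstrained-complexity (full-memory) receiver is the capacity-achieving transmit filter for the ISI channel $y_k=\sum_{\ell=0}^{L_{\mathrm H}}a_{k-\ell}h_\ell+w_k$ with $\vec a=\vec u\star\vec p$. *)

theory Defs
  imports "HOL-Analysis.Analysis"
begin

definition dtft :: "(int \<Rightarrow> complex) \<Rightarrow> real \<Rightarrow> complex" where
  "dtft x \<omega> = (\<Sum>\<^sub>\<infinity>n. x n * exp (- (\<i> * complex_of_real (real_of_int n * \<omega>))))"

definition conv :: "(int \<Rightarrow> complex) \<Rightarrow> (int \<Rightarrow> complex) \<Rightarrow> int \<Rightarrow> complex" where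
  "conv h p k = (\<Sum>\<^sub>\<infinity>l. h l * p (k - l))"

definition autocorr :: "(int \<Rightarrow> complex) \<Rightarrow> int \<Rightarrow> complex" where
  "autocorr h l = (\<Sum>\<^sub>\<infinity>k. h k * cnj (h (k - l)))"

text \<open>Waterfilling level max(0, theta - N0/|H(w)|^2); at zeros of H the
  term N0/|H|^2 is +infinity, so the level is 0.\<close>
definition waterfill :: "real \<Rightarrow> real \<Rightarrow> (real \<Rightarrow> complex) \<Rightarrow> real \<Rightarrow> real" where
  "waterfill N0 \<theta> H \<omega> =
     (if H \<omega> = 0 then 0 else max 0 (\<theta> - N0 / (cmod (H \<omega>))\<^sup>2))"

definition has_memory :: "(int \<Rightarrow> complex) \<Rightarrow> nat \<Rightarrow> bool" where
  "has_memory v K \<longleftrightarrow> (\<exists>s. v s \<noteq> 0 \<and> v (s + int K) \<noteq> 0 \<and>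
      (\<forall>k. k < s \<or> s + int K < k \<longrightarrow> v k = 0))"

end

theory Submission
  imports Defs "HOL-Computational_Algebra.Polynomial"
begin

text \<open>The combined response v = conv h p is finitely supported, so its DTFT V = H P is, up to the
  unimodular factor e^{-j s w}, a polynomial Q in z = e^{-j w}; in particular V cannot vanish on an
  interval. Hence the waterfilling level is clipped nowhere, theta |H|^2 >= N0 everywhere, and
  |Q(z)|^2 = theta |B(z)|^2 - N0 on the unit circle, where H = B(z). Multiplying by powers of z
  turns both sides into polynomials; the left one has degree at most L + 2K, the right one has
  degree exactly K + 2L because its top coefficient is theta h_L conj(h_0) = theta g_L, nonzero.\<close>

lemma infsum_eq_sum_superset:
  fixes f :: "'a \<Rightarrow> 'b::{comm_monoid_add,t2_space}"
  assumes "finite S" "\<And>x. x \<notin> S \<Longrightarrow> f x = 0"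
  shows "infsum f UNIV = sum f S"
proof -
  have "infsum f UNIV = infsum f S"
    by (rule infsum_cong_neutral) (use assms in auto)
  with assms(1) show ?thesis by simp
qed

lemma has_sum_sum:
  fixes f :: "'i \<Rightarrow> 'a \<Rightarrow> 'b::topological_comm_monoid_add"
  assumes "finite I" "\<And>i. i \<in> I \<Longrightarrow> (f i has_sum s i) A"
  shows "((\<lambda>x. \<Sum>i\<in>I. f i x) has_sum (\<Sum>i\<in>I. s i)) A"
  using assms by (induction I rule: finite_induct) (simp_all add: has_sum_add)

lemma dtft_cis: "dtft x \<omega> = (\<Sum>\<^sub>\<infinity>n. x n * cis (- (of_int n * \<omega>)))"
  unfolding dtft_def by (simp add: cis_conv_exp)

lemma dtft_conv:
  assumes h: "finite {l. h l \<noteq> 0}" and p: "(\<lambda>n. norm (p n)) summable_on UNIV"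
  shows "dtft (conv h p) \<omega> = dtft h \<omega> * dtft p \<omega>"
proof -
  define S where "S = {l. h l \<noteq> 0}"
  define e where "e n = cis (- (of_int n * \<omega>))" for n :: int
  define f where "f n = p n * e n" for n
  have conv_eq: "conv h p k = (\<Sum>l\<in>S. h l * p (k - l))" for k
    unfolding conv_def by (rule infsum_eq_sum_superset) (use h in \<open>auto simp: S_def\<close>)
  have e_diff: "e k = e l * e (k - l)" for k l
    by (simp add: e_def cis_mult algebra_simps)
  have "f summable_on UNIV"
    by (rule abs_summable_summable) (simp add: f_def e_def norm_mult p)
  then have "(f has_sum dtft p \<omega>) UNIV"
    unfolding summable_iff_has_sum_infsum dtft_cis by (simp add: f_def[abs_def] e_def)
  then have f_shift: "((\<lambda>k. f (k - l)) has_sum dtft p \<omega>) UNIV" for l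
    using has_sum_reindex_bij_betw[of "\<lambda>k. k - l" UNIV UNIV f]
    by (simp add: bij_betw_def inj_on_def image_iff exI[of _ "_ + l"])
  have "dtft (conv h p) \<omega> = (\<Sum>\<^sub>\<infinity>k. \<Sum>l\<in>S. h l * e l * f (k - l))"
    unfolding dtft_cis e_def[symmetric]
  proof (rule infsum_cong)
    fix k
    have "h l * p (k - l) * e k = h l * e l * f (k - l)" for l
      by (simp add: f_def e_diff[of k l] mult_ac)
    then show "conv h p k * e k = (\<Sum>l\<in>S. h l * e l * f (k - l))"
      unfolding conv_eq sum_distrib_right by (rule sum.cong[OF refl])
  qed
  also have "\<dots> = (\<Sum>l\<in>S. h l * e l * dtft p \<omega>)"
    by (intro infsumI has_sum_sum h[folded S_def] has_sum_cmult_right f_shift)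
  also have "\<dots> = dtft h \<omega> * dtft p \<omega>"
    unfolding dtft_cis e_def[symmetric] sum_distrib_right[symmetric]
    by (subst infsum_eq_sum_superset[of S]) (use h in \<open>auto simp: S_def\<close>)
  finally show ?thesis .
qed

definition taps_poly :: "(int \<Rightarrow> complex) \<Rightarrow> int \<Rightarrow> nat \<Rightarrow> complex poly" where
  "taps_poly x s N = (\<Sum>k\<le>N. monom (x (s + int k)) k)"

lemma coeff_taps_poly: "coeff (taps_poly x s N) n = (if n \<le> N then x (s + int n) else 0)"
  by (simp add: taps_poly_def coeff_sum)

lemma degree_taps_poly: "x (s + int N) \<noteq> 0 \<Longrightarrow> degree (taps_poly x s N) = N"
  by (intro antisym degree_le le_degree) (simp_all add: coeff_taps_poly)

lemma finite_nonzero_if_window: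
  assumes "\<forall>n. n < s \<or> s + int N < n \<longrightarrow> x n = 0"
  shows "finite {n. x n \<noteq> 0}"
proof (rule finite_subset)
  show "{n. x n \<noteq> 0} \<subseteq> {s..s + int N}"
    using assms by (auto simp: not_less)
qed simp

lemma dtft_eq_taps_poly:
  assumes "\<forall>n. n < s \<or> s + int N < n \<longrightarrow> x n = 0"
  shows "dtft x \<omega> = cis (- (of_int s * \<omega>)) * poly (taps_poly x s N) (cis (- \<omega>))"
proof -
  have window: "{s..s + int N} = (\<lambda>k. s + int k) ` {..N}"
  proof (intro equalityI subsetI)
    fix n assume "n \<in> {s..s + int N}"
    then show "n \<in> (\<lambda>k. s + int k) ` {..N}"
      by (intro image_eqI[of _ _ "nat (n - s)"]) auto
  qed auto
  have "dtft x \<omega> = (\<Sum>n\<in>{s..s + int N}. x n * cis (- (of_int n * \<omega>)))"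
    unfolding dtft_cis by (rule infsum_eq_sum_superset) (use assms in auto)
  also have "\<dots> = (\<Sum>k\<le>N. x (s + int k) * cis (- (of_int (s + int k) * \<omega>)))"
    unfolding window by (simp add: sum.reindex inj_on_def)
  also have "\<dots> = cis (- (of_int s * \<omega>)) * (\<Sum>k\<le>N. x (s + int k) * cis (- \<omega>) ^ k)"
  proof -
    have "cis (- (of_int (s + int k) * \<omega>)) = cis (- (of_int s * \<omega>)) * cis (- \<omega>) ^ k" for k
      unfolding Complex.DeMoivre cis_mult by (simp add: algebra_simps)
    then show ?thesis
      by (simp add: sum_distrib_left mult_ac)
  qed
  finally show ?thesis
    by (simp add: taps_poly_def poly_sum poly_monom)
qed

lemma cis_inj_on_interval:
  assumes "b - a \<le> 2 * pi"
  shows "inj_on cis {a<..<b}"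
proof (rule inj_onI)
  fix x y assume xy: "x \<in> {a<..<b}" "y \<in> {a<..<b}" and "cis x = cis y"
  then have "sin x = sin y \<and> cos x = cos y"
    by (simp add: complex_eq_iff)
  then obtain n :: int where n: "x = y + 2 * pi * n"
    using sin_cos_eq_iff by blast
  have "\<bar>x - y\<bar> < 2 * pi"
    using xy assms by auto
  then have "\<bar>2 * pi * n\<bar> < 2 * pi"
    by (simp add: n)
  then have "n = 0"
    by (simp add: abs_mult)
  with n show "x = y" by simp
qed

lemma poly_eq_0_if_vanishes_on_cis:
  fixes p :: "complex poly"
  assumes "open U" "U \<noteq> {}" "\<And>\<omega>. \<omega> \<in> U \<Longrightarrow> poly p (cis \<omega>) = 0"
  shows "p = 0"
proof (rule ccontr)
  assume "p \<noteq> 0"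
  obtain \<omega>\<^sub>0 r' where "0 < r'" "ball \<omega>\<^sub>0 r' \<subseteq> U"
    using assms(1,2) open_contains_ball by blast
  define r where "r = min r' 1"
  have r: "0 < r" "r \<le> 1" "ball \<omega>\<^sub>0 r \<subseteq> U"
    using \<open>0 < r'\<close> \<open>ball \<omega>\<^sub>0 r' \<subseteq> U\<close> by (auto simp: r_def)
  define I where "I = {\<omega>\<^sub>0 - r<..<\<omega>\<^sub>0 + r}"
  have "I \<subseteq> ball \<omega>\<^sub>0 r"
    by (auto simp: I_def dist_real_def)
  with r(3) have "I \<subseteq> U" by blast
  then have "cis ` I \<subseteq> {z. poly p z = 0}"
    using assms(3) by auto
  then have "finite (cis ` I)"
    using poly_roots_finite[OF \<open>p \<noteq> 0\<close>] finite_subset by blast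
  moreover have "inj_on cis I"
    unfolding I_def using r pi_gt3 by (intro cis_inj_on_interval) simp
  ultimately have "finite I"
    using finite_image_iff by blast
  then show False
    using infinite_Ioo[of "\<omega>\<^sub>0 - r" "\<omega>\<^sub>0 + r"] r by (simp add: I_def)
qed

definition autocorr_poly :: "complex poly \<Rightarrow> complex poly" where
  "autocorr_poly A = A * reflect_poly (map_poly cnj A)"

lemma degree_map_poly_cnj [simp]: "degree (map_poly cnj p) = degree p"
  by (simp add: degree_map_poly)

lemma poly_autocorr_poly:
  assumes "cmod z = 1"
  shows "poly (autocorr_poly A) z = z ^ degree A * of_real ((cmod (poly A z))\<^sup>2)"
proof -
  have "z * cnj z = 1"
    using complex_norm_square[of z] assms by simp
  then have "inverse z = cnj z"
    by (rule inverse_unique)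
  moreover have "z \<noteq> 0"
    using assms by auto
  ultimately have "poly (reflect_poly (map_poly cnj A)) z = z ^ degree A * cnj (poly A z)"
    by (simp add: poly_reflect_poly_nz)
  then show ?thesis
    unfolding autocorr_poly_def poly_mult complex_norm_square by (simp add: mult_ac)
qed

lemma degree_autocorr_poly_le: "degree (autocorr_poly A) \<le> 2 * degree A"
  unfolding autocorr_poly_def
  using degree_mult_le[of A "reflect_poly (map_poly cnj A)"] degree_reflect_poly_le[of "map_poly cnj A"]
  by simp

lemma degree_autocorr_poly:
  assumes "coeff A 0 \<noteq> 0"
  shows "degree (autocorr_poly A) = 2 * degree A"
proof -
  have "coeff (map_poly cnj A) 0 \<noteq> 0"
    using assms by (simp add: coeff_map_poly)
  moreover from this have "map_poly cnj A \<noteq> 0"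
    by auto
  moreover have "A \<noteq> 0"
    using assms by auto
  ultimately show ?thesis
    by (simp add: autocorr_poly_def degree_mult_eq)
qed

lemma degree_le_if_power_spectrum_affine:
  fixes A B :: "complex poly" and \<theta> c :: real
  assumes B0: "coeff B 0 \<noteq> 0" and \<theta>: "\<theta> \<noteq> 0"
    and spectra: "\<And>\<omega>. (cmod (poly A (cis \<omega>)))\<^sup>2 = \<theta> * (cmod (poly B (cis \<omega>)))\<^sup>2 - c"
  shows "degree B \<le> degree A"
proof (cases "degree B = 0")
  case False
  define m n where "m = degree A" and "n = degree B"
  define R where "R = smult (of_real \<theta>) (autocorr_poly B) - monom (of_real c) n"
  have "poly (monom 1 n * autocorr_poly A - monom 1 m * R) (cis \<omega>) = 0" for \<omega>
  proof -
    have power: "(of_real (cmod (poly A (cis \<omega>))))\<^sup>2 =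
        of_real \<theta> * (of_real (cmod (poly B (cis \<omega>))))\<^sup>2 - (of_real c :: complex)"
      using arg_cong[OF spectra[of \<omega>], of complex_of_real] by simp
    show ?thesis
      by (simp add: power R_def m_def n_def poly_autocorr_poly poly_monom algebra_simps)
  qed
  then have identity: "monom 1 n * autocorr_poly A = monom 1 m * R"
    using poly_eq_0_if_vanishes_on_cis[of UNIV "monom 1 n * autocorr_poly A - monom 1 m * R"]
    by simp
  have "degree (smult (of_real \<theta>) (autocorr_poly B)) = 2 * n"
    using \<theta> B0 by (simp add: degree_autocorr_poly n_def)
  moreover have "degree (monom (of_real c :: complex) n) < 2 * n"
    using False degree_monom_le[of "of_real c :: complex" n] by (simp add: n_def)
  ultimately have "degree R = 2 * n"
    unfolding R_def diff_conv_add_uminus by (subst degree_add_eq_left) simp_all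
  then have "m + 2 * n = degree (monom 1 m * R)"
    using False by (subst degree_mult_eq) (auto simp: degree_monom_eq n_def)
  also have "\<dots> = degree (monom 1 n * autocorr_poly A)"
    by (simp add: identity)
  also have "\<dots> \<le> n + 2 * m"
    using degree_mult_le[of "monom 1 n" "autocorr_poly A"] degree_autocorr_poly_le[of A]
    by (simp add: degree_monom_eq m_def)
  finally show ?thesis
    by (simp add: m_def n_def)
qed simp

lemma dtft_not_vanishing_on_open:
  assumes "has_memory v K" "open U" "U \<noteq> {}"
  shows "\<exists>\<omega>\<in>U. dtft v \<omega> \<noteq> 0"
proof (rule ccontr)
  assume "\<not> ?thesis"
  then have vanish: "dtft v \<omega> = 0" if "\<omega> \<in> U" for \<omega>
    using that by blast
  obtain s where "v s \<noteq> 0" and window: "\<forall>n. n < s \<or> s + int K < n \<longrightarrow> v n = 0"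
    using assms(1) unfolding has_memory_def by blast
  define Q where "Q = taps_poly v s K"
  have "Q \<noteq> 0"
    using \<open>v s \<noteq> 0\<close> coeff_taps_poly[of v s K 0] by (auto simp: Q_def)
  moreover have "poly Q (cis \<omega>) = 0" if "\<omega> \<in> uminus ` U" for \<omega>
    using that vanish dtft_eq_taps_poly[OF window, of "- \<omega>"] by (auto simp: Q_def)
  ultimately show False
    using poly_eq_0_if_vanishes_on_cis[of "uminus ` U" Q] open_negations[OF assms(2)] assms(3)
    by auto
qed

lemma waterfill_eq_0:
  assumes "\<theta> * (cmod (H \<omega>))\<^sup>2 < N0"
  shows "waterfill N0 \<theta> H \<omega> = 0"
proof (cases "H \<omega> = 0")
  case False
  then have "\<theta> < N0 / (cmod (H \<omega>))\<^sup>2"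
    using assms by (simp add: field_simps)
  then show ?thesis
    by (simp add: waterfill_def)
qed (simp add: waterfill_def)

lemma cmod_sq_mult_waterfill:
  assumes "0 < N0" "N0 \<le> \<theta> * (cmod (H \<omega>))\<^sup>2"
  shows "(cmod (H \<omega>))\<^sup>2 * waterfill N0 \<theta> H \<omega> = \<theta> * (cmod (H \<omega>))\<^sup>2 - N0"
proof -
  have "H \<omega> \<noteq> 0"
    using assms by auto
  moreover from this have "N0 / (cmod (H \<omega>))\<^sup>2 \<le> \<theta>"
    using assms(2) by (simp add: field_simps)
  ultimately show ?thesis
    by (simp add: waterfill_def field_simps)
qed

lemma waterfill_level_above_noise:
  assumes h_taps: "\<forall>l. l < 0 \<or> int L < l \<longrightarrow> h l = 0"
    and p_summable: "(\<lambda>n. norm (p n)) summable_on UNIV"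
    and waterfilling: "\<forall>\<omega>. (cmod (dtft p \<omega>))\<^sup>2 = waterfill N0 \<theta> (dtft h) \<omega>"
    and v_memory: "has_memory (conv h p) K"
  shows "N0 \<le> \<theta> * (cmod (dtft h \<omega>))\<^sup>2"
proof -
  have h_finite: "finite {l. h l \<noteq> 0}"
    using finite_nonzero_if_window[of 0 L h] h_taps by simp
  define U where "U = {\<omega>. \<theta> * (cmod (dtft h \<omega>))\<^sup>2 < N0}"
  define B where "B = taps_poly h 0 L"
  have H: "dtft h \<omega> = poly B (cis (- \<omega>))" for \<omega>
    using dtft_eq_taps_poly[of 0 L h] h_taps by (auto simp: B_def)
  have "continuous_on UNIV (\<lambda>\<omega>. \<theta> * (cmod (dtft h \<omega>))\<^sup>2)"
    unfolding H by (intro continuous_intros)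
  then have "open U"
    unfolding U_def by (rule open_Collect_less) simp_all
  moreover have "dtft (conv h p) \<omega> = 0" if "\<omega> \<in> U" for \<omega>
  proof -
    have "(cmod (dtft p \<omega>))\<^sup>2 = 0"
      using that waterfilling waterfill_eq_0[of \<theta> "dtft h" \<omega> N0] by (simp add: U_def)
    with h_finite show ?thesis
      by (simp add: dtft_conv p_summable)
  qed
  ultimately have "U = {}"
    using dtft_not_vanishing_on_open[OF v_memory] by blast
  then show ?thesis
    by (auto simp: U_def not_less)
qed

lemma power_spectrum_conv_waterfill:
  assumes h: "finite {l. h l \<noteq> 0}"
    and p_summable: "(\<lambda>n. norm (p n)) summable_on UNIV"
    and waterfilling: "\<forall>\<omega>. (cmod (dtft p \<omega>))\<^sup>2 = waterfill N0 \<theta> (dtft h) \<omega>"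
    and "0 < N0" "N0 \<le> \<theta> * (cmod (dtft h \<omega>))\<^sup>2"
  shows "(cmod (dtft (conv h p) \<omega>))\<^sup>2 = \<theta> * (cmod (dtft h \<omega>))\<^sup>2 - N0"
proof -
  have "(cmod (dtft (conv h p) \<omega>))\<^sup>2 = (cmod (dtft h \<omega>))\<^sup>2 * waterfill N0 \<theta> (dtft h) \<omega>"
    using waterfilling by (simp add: dtft_conv[OF h p_summable] norm_mult power_mult_distrib)
  also have "\<dots> = \<theta> * (cmod (dtft h \<omega>))\<^sup>2 - N0"
    using assms(4,5) by (rule cmod_sq_mult_waterfill)
  finally show ?thesis .
qed

lemma autocorr_last_lag:
  assumes "\<forall>l. l < 0 \<or> int L < l \<longrightarrow> h l = 0"
  shows "autocorr h (int L) = h (int L) * cnj (h 0)"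
proof -
  have "h k * cnj (h (k - int L)) = 0" if "k \<noteq> int L" for k
    using assms that by (cases "k < int L") auto
  then show ?thesis
    unfolding autocorr_def by (subst infsum_eq_sum_superset[of "{int L}"]) auto
qed

theorem theorem2:
  fixes h p :: "int \<Rightarrow> complex" and L K :: nat and N0 \<theta> :: real
  assumes h_taps: "\<forall>l. l < 0 \<or> int L < l \<longrightarrow> h l = 0"
    and h_memory: "autocorr h (int L) \<noteq> 0"
    and N0_pos: "N0 > 0"
    and p_summable: "(\<lambda>n. norm (p n)) summable_on UNIV"
    and waterfilling: "\<forall>\<omega>. (cmod (dtft p \<omega>))\<^sup>2 = waterfill N0 \<theta> (dtft h) \<omega>"
    and power: "integral {-pi..pi} (\<lambda>\<omega>. (cmod (dtft p \<omega>))\<^sup>2) = 2 * pi"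
    and v_memory: "has_memory (conv h p) K"
  shows "L \<le> K"
proof -
  obtain s where v_last: "conv h p (s + int K) \<noteq> 0"
    and v_window: "\<forall>n. n < s \<or> s + int K < n \<longrightarrow> conv h p n = 0"
    using v_memory unfolding has_memory_def by blast
  define B Q where "B = taps_poly h 0 L" and "Q = taps_poly (conv h p) s K"
  have "h (int L) \<noteq> 0" "h 0 \<noteq> 0"
    using h_memory by (simp_all add: autocorr_last_lag[OF h_taps])
  then have "degree B = L" "coeff B 0 \<noteq> 0"
    by (simp_all add: B_def degree_taps_poly coeff_taps_poly)
  have "degree Q = K"
    using v_last by (simp add: Q_def degree_taps_poly)
  have h_finite: "finite {l. h l \<noteq> 0}"
    using finite_nonzero_if_window[of 0 L h] h_taps by simp
  have level: "N0 \<le> \<theta> * (cmod (dtft h \<omega>))\<^sup>2" for \<omega>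
    using waterfill_level_above_noise[OF h_taps p_summable waterfilling v_memory] .
  then have "\<theta> \<noteq> 0"
    using N0_pos by (metis mult_zero_left not_le)
  have "(cmod (poly Q (cis \<omega>)))\<^sup>2 = \<theta> * (cmod (poly B (cis \<omega>)))\<^sup>2 - N0" for \<omega>
    using power_spectrum_conv_waterfill[OF h_finite p_summable waterfilling N0_pos level, of "- \<omega>"]
      h_taps dtft_eq_taps_poly[OF v_window, of "- \<omega>"] dtft_eq_taps_poly[of 0 L h "- \<omega>"]
    by (simp add: B_def Q_def norm_mult)
  then have "degree B \<le> degree Q"
    by (rule degree_le_if_power_spectrum_affine[OF \<open>coeff B 0 \<noteq> 0\<close> \<open>\<theta> \<noteq> 0\<close>])
  with \<open>degree B = L\<close> \<open>degree Q = K\<close> show ?thesis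
    by simp
qed

end
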